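(* Fix $\beta\in[0,1)$. For each $n$, let $l=l_n$ be an integer with $\liminf_{n\to\infty} l_n/n>\beta$, let $G_0$ be an $n\times l$ binary matrix whose entries are i.i.d. uniform on $\{0,1\}$, and let $G_1$ be any $n\times k$ binary matrix and $\mathbf m\in\{0,1\}^k$ any message. Consider the defect model and linear-equation encoding described in the context. Then the probability of encoding failure $P(E=0)$ (over the random choice of $G_0$ and the random defect pattern) tends to $0$ as $n\to\infty$. In particular, rates $k/n=1-l/n$ arbitrarily close to $C_{\mathrm{BDC}}=1-\beta$ are achievable on the binary defect channel using encoding by solving the linear equation $G_0^{\mathcal U}\mathbf d=\mathbf b^{\mathcal U}$.
   Context: All arithmetic is over $\mathrm{GF}(2)$. Defect model: each of the $n$ memory cells is independently defective with probability $\beta$; a defective cell is stuck at $0$ or at $1$, each with probability $1/2$, independently. Let $\mathcal U\subseteq\{1,\dots,n\}$ be the set of defect positions, $U=|\mathcal U|$, and $\mathbf s^{\mathcal U}\in\{0,1\}^{U}$ the vector of stuck-at values. For a matrix $M$ (resp. vector $\mathbf v$) with rows indexed by $\{1,\dots,n\}$, $M^{\mathcal U}$ (resp. $\mathbf v^{\mathcal U}$) denotes the submatrix (resp. subvector) of rows indexed by $\mathcal U$. Encoding: set $\mathbf b=G_1\mathbf m+\mathbf s$ on $\mathcal U$, i.e. $\mathbf b^{\mathcal U}=(G_1\mathbf m)^{\mathcal U}+\mathbf s^{\mathcal U}$, and look for $\mathbf d\in\{0,1\}^l$ with $G_0^{\mathcal U}\mathbf d=\mathbf b^{\mathcal U}$;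 then the codeword $\mathbf c=G_1\mathbf m+G_0\mathbf d$ agrees with the stuck-at value at every defect position. $E=1$ (encoding success) if such $\mathbf d$ exists, and $E=0$ (encoding failure) otherwise. *)

theory Defs
  imports "HOL-Probability.Probability" "HOL-Library.Z2"
begin

text \<open>Binary matrices/vectors are functions on indices (0-based) with entries in GF(2) = bit.
  An n x l matrix is M :: nat => nat => bit with rows i < n and columns j < l.\<close>

definition mat_vec :: "nat \<Rightarrow> (nat \<Rightarrow> nat \<Rightarrow> bit) \<Rightarrow> (nat \<Rightarrow> bit) \<Rightarrow> nat \<Rightarrow> bit" where
  "mat_vec cols M v = (\<lambda>i. \<Sum>j<cols. M i j * v j)"

definition random_matrix :: "nat \<Rightarrow> nat \<Rightarrow> (nat \<Rightarrow> nat \<Rightarrow> bit) pmf" where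
  "random_matrix n l = Pi_pmf {0..<n} (\<lambda>_. 0) (\<lambda>_. Pi_pmf {0..<l} 0 (\<lambda>_. pmf_of_set UNIV))"

text \<open>State of one cell: None = not defective; Some s = defective, stuck at s.
  Defective w.p. beta, stuck value uniform.\<close>
definition cell_pmf :: "real \<Rightarrow> bit option pmf" where
  "cell_pmf \<beta> = do { dfct \<leftarrow> bernoulli_pmf \<beta>;
      if dfct then map_pmf Some (pmf_of_set UNIV) else return_pmf None }"

definition defect_pmf :: "real \<Rightarrow> nat \<Rightarrow> (nat \<Rightarrow> bit option) pmf" where
  "defect_pmf \<beta> n = Pi_pmf {0..<n} None (\<lambda>_. cell_pmf \<beta>)"

text \<open>Encoding success (E = 1): with c = G1 m and b^U = c^U + s^U, there is d in GF(2)^l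
  with G0^U d = b^U.\<close>
definition encoding_success ::
  "nat \<Rightarrow> nat \<Rightarrow> (nat \<Rightarrow> nat \<Rightarrow> bit) \<Rightarrow> (nat \<Rightarrow> bit) \<Rightarrow> (nat \<Rightarrow> bit option) \<Rightarrow> bool" where
  "encoding_success n l G0 c D =
     (\<exists>d :: nat \<Rightarrow> bit. \<forall>i<n. \<forall>s. D i = Some s \<longrightarrow> mat_vec l G0 d i = c i + s)"

definition failure_prob ::
  "real \<Rightarrow> nat \<Rightarrow> nat \<Rightarrow> nat \<Rightarrow> (nat \<Rightarrow> nat \<Rightarrow> bit) \<Rightarrow> (nat \<Rightarrow> bit) \<Rightarrow> real" where
  "failure_prob \<beta> n l k G1 m =
     measure_pmf.prob (pair_pmf (random_matrix n l) (defect_pmf \<beta> n))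
       {(G0, D). \<not> encoding_success n l G0 (mat_vec k G1 m) D}"

end

theory Submission
  imports Defs
begin

text \<open>Given the defect set U, encoding fails only if the system G0^U d = b^U is unsolvable;
  over GF(2) this means that some nonempty set of rows of G0^U sums to zero. For uniform G0 each
  such set sums to zero with probability 2^-l, so by the union bound the failure probability is at
  most min 1 (2^|U| / 2^l), which is at most r^|U| / r^l for every 1 < r \<le> 2. Averaging over the
  independent defects gives (1 - \<beta> + \<beta> r)^n / r^l. If l \<ge> q n with \<beta> < q, the choice
  r = 2q / (\<beta> + q) makes 1 - \<beta> + \<beta> r < r^q, so the failure probability decays geometrically.\<close>

section \<open>Linear systems over GF(2)\<close>

(* Keep sums of bits in ring form; the default simp set turns them into parities of cardinalities. *)
declare add_bit_eq_xor [simp del] mult_bit_eq_and [simp del]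

lemma UNIV_bit: "(UNIV :: bit set) = {0, 1}"
  by auto

lemma finite_UNIV_bit [simp]: "finite (UNIV :: bit set)"
  by (simp add: UNIV_bit)

lemma card_UNIV_bit: "card (UNIV :: bit set) = 2"
  by (simp add: UNIV_bit)

lemma bit_add_self [simp]: "(x :: bit) + x = 0"
  by (cases x) simp_all

lemma bit_add_eq_0_iff: "(x :: bit) + y = 0 \<longleftrightarrow> x = y"
  by (cases x; cases y) simp_all

lemma mat_vec_Suc: "mat_vec (Suc l) A d i = mat_vec l A d i + A i l * d l"
  by (simp add: mat_vec_def)

lemma mat_vec_upd_out_of_range: "mat_vec l A (d(l := x)) = mat_vec l A d"
  by (simp add: mat_vec_def)

definition solvable_on :: "nat set \<Rightarrow> nat \<Rightarrow> (nat \<Rightarrow> nat \<Rightarrow> bit) \<Rightarrow> bool" where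
  "solvable_on U l A \<longleftrightarrow> (\<forall>b. \<exists>d. \<forall>i\<in>U. mat_vec l A d i = b i)"

(* Over GF(2) a nontrivial linear relation among rows is a nonempty set of rows summing to zero. *)
definition rows_dependent :: "nat set \<Rightarrow> nat \<Rightarrow> (nat \<Rightarrow> nat \<Rightarrow> bit) \<Rightarrow> bool" where
  "rows_dependent U l A \<longleftrightarrow> (\<exists>S\<subseteq>U. S \<noteq> {} \<and> (\<forall>j<l. (\<Sum>i\<in>S. A i j) = 0))"

lemma solvable_on_Suc: "solvable_on U l A \<Longrightarrow> solvable_on U (Suc l) A"
  unfolding solvable_on_def
  by (metis mat_vec_Suc mat_vec_upd_out_of_range fun_upd_same mult_zero_right add_0_right)

lemma rows_dependent_Suc_zero_column:
  assumes "rows_dependent U l A" and "\<forall>i\<in>U. A i l = 0"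
  shows "rows_dependent U (Suc l) A"
proof -
  obtain S where S: "S \<subseteq> U" "S \<noteq> {}" "\<forall>j<l. (\<Sum>i\<in>S. A i j) = 0"
    using assms(1) unfolding rows_dependent_def by blast
  have "(\<Sum>i\<in>S. A i l) = 0"
    using S(1) assms(2) by (intro sum.neutral) blast
  with S show ?thesis
    unfolding rows_dependent_def by (metis less_Suc_eq)
qed

lemma solvable_on_Suc_pivot:
  assumes "p \<in> U" "A p l = 1"
    and "solvable_on (U - {p}) l (\<lambda>i j. A i j + A i l * A p j)" (is "solvable_on _ _ ?A'")
  shows "solvable_on U (Suc l) A"
  unfolding solvable_on_def
proof
  fix b :: "nat \<Rightarrow> bit"
  obtain d' where d': "\<forall>i\<in>U - {p}. mat_vec l ?A' d' i = b i + A i l * b p"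
    using assms(3) unfolding solvable_on_def by (elim allE[of _ "\<lambda>i. b i + A i l * b p"]) blast
  define P where "P = mat_vec l A d' p"
  define d where "d = d'(l := b p + P)"
  have reduced: "mat_vec l ?A' d' i = mat_vec l A d' i + A i l * P" for i
    unfolding P_def mat_vec_def by (simp add: distrib_right sum.distrib sum_distrib_left mult.assoc)
  have "mat_vec (Suc l) A d i = b i" if "i \<in> U" for i
  proof (cases "i = p")
    case True
    then show ?thesis
      by (simp add: d_def mat_vec_Suc mat_vec_upd_out_of_range flip: P_def)
         (simp add: assms(2) add.left_commute)
  next
    case False
    with that d' have "mat_vec l A d' i + A i l * P = b i + A i l * b p"
      by (simp add: reduced)
    then have "mat_vec l A d' i = b i + A i l * b p + A i l * P"
      by (metis add.assoc bit_add_self add_0_right)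
    then show ?thesis
      by (simp add: d_def mat_vec_Suc mat_vec_upd_out_of_range distrib_left ac_simps)
  qed
  then show "\<exists>d. \<forall>i\<in>U. mat_vec (Suc l) A d i = b i" by blast
qed

lemma rows_dependent_Suc_pivot:
  assumes "finite U" "p \<in> U" "A p l = 1"
    and "rows_dependent (U - {p}) l (\<lambda>i j. A i j + A i l * A p j)"
  shows "rows_dependent U (Suc l) A"
proof -
  obtain S' where S': "S' \<subseteq> U - {p}" "S' \<noteq> {}"
      and zero: "\<forall>j<l. (\<Sum>i\<in>S'. A i j + A i l * A p j) = 0"
    using assms(4) unfolding rows_dependent_def by blast
  have fin: "finite S'" "p \<notin> S'"
    using S'(1) assms(1) finite_subset by auto
  define Y where "Y = (\<Sum>i\<in>S'. A i l)"
  define S where "S = (if Y = 0 then S' else insert p S')"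
  have sum_S: "(\<Sum>i\<in>S. A i j) = (\<Sum>i\<in>S'. A i j) + Y * A p j" for j
    using fin by (cases "Y = 0") (auto simp: S_def bit_not_zero_iff)
  have sum_S': "(\<Sum>i\<in>S'. A i j) = (\<Sum>i\<in>S'. A i j + A i l * A p j) + Y * A p j" for j
    by (simp add: Y_def sum.distrib sum_distrib_right add.assoc)
  have "(\<Sum>i\<in>S. A i j) = 0" if "j < Suc l" for j
  proof (cases "j = l")
    case True
    then show ?thesis by (simp add: sum_S assms(3) flip: Y_def)
  next
    case False
    with that zero have "(\<Sum>i\<in>S'. A i j + A i l * A p j) = 0" by simp
    then show ?thesis by (simp add: sum_S sum_S')
  qed
  moreover have "S \<subseteq> U" "S \<noteq> {}"
    using S' assms(2) by (auto simp: S_def)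
  ultimately show ?thesis
    unfolding rows_dependent_def by blast
qed

lemma solvable_on_or_rows_dependent:
  "finite U \<Longrightarrow> solvable_on U l A \<or> rows_dependent U l A"
proof (induction l arbitrary: U A)
  case 0
  show ?case
  proof (cases "U = {}")
    case True
    then show ?thesis by (simp add: solvable_on_def)
  next
    case False
    then show ?thesis by (auto simp: rows_dependent_def)
  qed
next
  case (Suc l)
  show ?case
  proof (cases "\<exists>p\<in>U. A p l = 1")
    case True
    then obtain p where "p \<in> U" "A p l = 1" by blast
    with Suc.prems Suc.IH[of "U - {p}" "\<lambda>i j. A i j + A i l * A p j"] show ?thesis
      using solvable_on_Suc_pivot rows_dependent_Suc_pivot by blast
  next
    case False
    with Suc.prems Suc.IH[of U A] show ?thesis
      using solvable_on_Suc rows_dependent_Suc_zero_column by (metis bit_not_one_iff)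
  qed
qed
lemma encoding_success_if_solvable_on:
  assumes "solvable_on {i\<in>{0..<n}. D i \<noteq> None} l G0"
  shows "encoding_success n l G0 c D"
proof -
  obtain d where "\<forall>i\<in>{i\<in>{0..<n}. D i \<noteq> None}. mat_vec l G0 d i = c i + the (D i)"
    using assms unfolding solvable_on_def by (elim allE[of _ "\<lambda>i. c i + the (D i)"]) blast
  then show ?thesis
    unfolding encoding_success_def by (intro exI[of _ d]) auto
qed

section \<open>Random matrices\<close>

lemma measure_pair_pmf_eq_expectation:
  "measure_pmf.prob (pair_pmf p q) E =
     measure_pmf.expectation q (\<lambda>y. measure_pmf.prob p {x. (x, y) \<in> E})"
proof -
  have "pair_pmf p q = bind_pmf q (\<lambda>y. map_pmf (\<lambda>x. (x, y)) p)"
    unfolding pair_pmf_def map_pmf_def by (rule bind_commute_pmf)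
  then have "emeasure (pair_pmf p q) E = (\<integral>\<^sup>+y. emeasure p {x. (x, y) \<in> E} \<partial>q)"
    by (simp add: vimage_def)
  also have "\<dots> = (\<integral>\<^sup>+y. ennreal (measure_pmf.prob p {x. (x, y) \<in> E}) \<partial>q)"
    by (simp add: measure_pmf.emeasure_eq_measure)
  also have "\<dots> = ennreal (measure_pmf.expectation q (\<lambda>y. measure_pmf.prob p {x. (x, y) \<in> E}))"
    by (intro nn_integral_eq_integral measure_pmf.integrable_const_bound[where B = 1]) auto
  finally show ?thesis
    by (simp add: measure_pmf.emeasure_eq_measure)
qed

lemma measure_Pi_pmf_insert_le:
  assumes "finite A" "x \<notin> A"
    and "\<And>f. measure_pmf.prob (p x) {y. f(x := y) \<in> E} \<le> c"
  shows "measure_pmf.prob (Pi_pmf (insert x A) dflt p) E \<le> c"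
proof -
  have "measure_pmf.prob (Pi_pmf (insert x A) dflt p) E =
      measure_pmf.expectation (Pi_pmf A dflt p) (\<lambda>f. measure_pmf.prob (p x) {y. f(x := y) \<in> E})"
    by (simp add: Pi_pmf_insert[OF assms(1,2)] measure_pair_pmf_eq_expectation)
  also have "\<dots> \<le> c"
    by (intro measure_pmf.integral_le_const measure_pmf.integrable_const_bound[where B = 1]
        AE_pmfI assms(3)) auto
  finally show ?thesis .
qed

lemma prob_uniform_vector_eq:
  "measure_pmf.prob (Pi_pmf {0..<l} 0 (\<lambda>_. pmf_of_set UNIV)) {y :: nat \<Rightarrow> bit. \<forall>j<l. y j = g j}
     = (1/2) ^ l"
proof -
  have Pi_form: "{y :: nat \<Rightarrow> bit. \<forall>j<l. y j = g j} = Pi {0..<l} (\<lambda>j. {g j})"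
    by auto
  have half: "measure_pmf.prob (pmf_of_set (UNIV :: bit set)) {b} = 1/2" for b
    by (subst measure_pmf_of_set) (simp_all add: card_UNIV_bit)
  show ?thesis
    by (simp add: Pi_form measure_Pi_pmf_Pi half)
qed

lemma prob_rows_sum_zero_le:
  assumes "S \<subseteq> {0..<n}" "S \<noteq> {}"
  shows "measure_pmf.prob (random_matrix n l) {M. \<forall>j<l. (\<Sum>i\<in>S. M i j) = 0} \<le> (1/2) ^ l"
proof -
  obtain i0 where i0: "i0 \<in> S" using assms(2) by blast
  then have split: "{0..<n} = insert i0 ({0..<n} - {i0})"
    using assms(1) by blast
  have "measure_pmf.prob (Pi_pmf {0..<l} 0 (\<lambda>_. pmf_of_set UNIV))
      {y. \<forall>j<l. (\<Sum>i\<in>S. (f(i0 := y)) i j) = 0} \<le> (1/2) ^ l" for f :: "nat \<Rightarrow> nat \<Rightarrow> bit"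
  proof -
    have "(\<Sum>i\<in>S. (f(i0 := y)) i j) = y j + (\<Sum>i\<in>S - {i0}. f i j)" for y j
      using i0 finite_subset[OF assms(1)] by (simp add: sum.remove)
    then have "{y. \<forall>j<l. (\<Sum>i\<in>S. (f(i0 := y)) i j) = 0}
        = {y. \<forall>j<l. y j = (\<Sum>i\<in>S - {i0}. f i j)}"
      by (simp add: bit_add_eq_0_iff)
    then show ?thesis
      by (simp add: prob_uniform_vector_eq)
  qed
  then show ?thesis
    unfolding random_matrix_def
    by (subst split) (rule measure_Pi_pmf_insert_le; simp)
qed

lemma prob_encoding_failure_le:
  "measure_pmf.prob (random_matrix n l) {G0. \<not> encoding_success n l G0 c D}
     \<le> 2 ^ card {i\<in>{0..<n}. D i \<noteq> None} * (1/2) ^ l"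
proof -
  define U where "U = {i\<in>{0..<n}. D i \<noteq> None}"
  define Z where "Z S = {M. \<forall>j<l. (\<Sum>i\<in>S. M i j) = (0 :: bit)}" for S :: "nat set"
  have "finite U" by (simp add: U_def)
  have "{G0. \<not> encoding_success n l G0 c D} \<subseteq> (\<Union>S\<in>Pow U - {{}}. Z S)"
  proof
    fix G0 assume "G0 \<in> {G0. \<not> encoding_success n l G0 c D}"
    then have "rows_dependent U l G0"
      using solvable_on_or_rows_dependent[OF \<open>finite U\<close>] encoding_success_if_solvable_on
      unfolding U_def by blast
    then show "G0 \<in> (\<Union>S\<in>Pow U - {{}}. Z S)"
      unfolding rows_dependent_def Z_def by blast
  qed
  then have "measure_pmf.prob (random_matrix n l) {G0. \<not> encoding_success n l G0 c D}
      \<le> measure_pmf.prob (random_matrix n l) (\<Union>S\<in>Pow U - {{}}. Z S)"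
    by (intro measure_pmf.finite_measure_mono) simp_all
  also have "\<dots> \<le> (\<Sum>S\<in>Pow U - {{}}. measure_pmf.prob (random_matrix n l) (Z S))"
    using \<open>finite U\<close> by (intro measure_pmf.finite_measure_subadditive_finite) auto
  also have "\<dots> \<le> (\<Sum>S\<in>Pow U - {{}}. (1/2) ^ l)"
    unfolding Z_def by (intro sum_mono prob_rows_sum_zero_le) (auto simp: U_def)
  also have "\<dots> \<le> 2 ^ card U * (1/2) ^ l"
  proof -
    have "card (Pow U - {{}}) \<le> card (Pow U)"
      using \<open>finite U\<close> by (intro card_mono) auto
    then show ?thesis
      using \<open>finite U\<close> by (simp add: card_Pow)
  qed
  finally show ?thesis
    unfolding U_def .
qed
section \<open>Random defects\<close>

lemma cell_pmf_defective_eq_bernoulli: "map_pmf (\<lambda>x. x \<noteq> None) (cell_pmf \<beta>) = bernoulli_pmf \<beta>"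
proof -
  have "map_pmf (\<lambda>x. x \<noteq> None)
      (if d then map_pmf Some (pmf_of_set (UNIV :: bit set)) else return_pmf None) = return_pmf d" for d
    by (simp add: map_pmf_comp)
  then show ?thesis
    by (simp only: cell_pmf_def map_bind_pmf bind_return_pmf')
qed

lemma finite_set_cell_pmf: "finite (set_pmf (cell_pmf \<beta>))"
  by (rule finite_subset[OF subset_UNIV]) (simp add: UNIV_option_conv)

lemma expectation_defect_count_power:
  assumes "0 \<le> \<beta>" "\<beta> \<le> 1" "0 \<le> r"
  shows "measure_pmf.expectation (defect_pmf \<beta> n) (\<lambda>D. r ^ card {i\<in>{0..<n}. D i \<noteq> None})
           = (1 - \<beta> + \<beta> * r) ^ n"
proof -
  let ?w = "\<lambda>x :: bit option. if x \<noteq> None then r else 1"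
  have cell: "measure_pmf.expectation (cell_pmf \<beta>) ?w = 1 - \<beta> + \<beta> * r"
  proof -
    have "measure_pmf.expectation (cell_pmf \<beta>) ?w
        = measure_pmf.expectation (map_pmf (\<lambda>x. x \<noteq> None) (cell_pmf \<beta>)) (\<lambda>b. if b then r else 1)"
      by simp
    also have "\<dots> = 1 - \<beta> + \<beta> * r"
      unfolding cell_pmf_defective_eq_bernoulli using assms by (simp add: algebra_simps)
    finally show ?thesis .
  qed
  have "r ^ card {i\<in>{0..<n}. D i \<noteq> None} = (\<Prod>i\<in>{0..<n}. ?w (D i))" for D :: "nat \<Rightarrow> bit option"
    by (simp add: prod.If_cases Int_def conj_commute)
  then have "measure_pmf.expectation (defect_pmf \<beta> n) (\<lambda>D. r ^ card {i\<in>{0..<n}. D i \<noteq> None})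
      = (\<Prod>i\<in>{0..<n}. measure_pmf.expectation (cell_pmf \<beta>) ?w)"
    unfolding defect_pmf_def
    by (simp only:) (rule expectation_prod_Pi_pmf;
        simp add: integrable_measure_pmf_finite finite_set_cell_pmf assms(3))
  also have "\<dots> = (1 - \<beta> + \<beta> * r) ^ n"
    by (simp only: cell prod_constant card_atLeastLessThan diff_zero)
  finally show ?thesis .
qed
lemma finite_set_defect_pmf: "finite (set_pmf (defect_pmf \<beta> n))"
  by (simp add: defect_pmf_def set_Pi_pmf finite_PiE_dflt finite_set_cell_pmf)

section \<open>Geometric decay of the failure probability\<close>

lemma min_one_le_power_ratio:
  fixes r :: real
  assumes "1 < r" "r \<le> 2"
  shows "min 1 (2 ^ u * (1/2) ^ L) \<le> r ^ u / r ^ L"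
proof (cases "L \<le> u")
  case True
  then have "r ^ u / r ^ L = r ^ (u - L)"
    using assms by (simp add: power_diff)
  moreover have "1 \<le> r ^ (u - L)"
    using assms by (simp add: one_le_power)
  ultimately show ?thesis
    by (simp add: min.coboundedI1)
next
  case False
  then have "2 ^ u * (1/2 :: real) ^ L = 1 / 2 ^ (L - u)"
    by (simp add: power_diff power_one_over)
  also have "\<dots> \<le> 1 / r ^ (L - u)"
    using assms by (intro divide_left_mono power_mono) auto
  also have "\<dots> = r ^ u / r ^ L"
    using assms False by (simp add: power_diff)
  finally show ?thesis by simp
qed

lemma failure_prob_le:
  assumes "0 \<le> \<beta>" "\<beta> \<le> 1" "1 < r" "r \<le> 2"
  shows "failure_prob \<beta> n L K G m \<le> (1 - \<beta> + \<beta> * r) ^ n / r ^ L"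
proof -
  let ?defects = "\<lambda>D. card {i\<in>{0..<n}. D i \<noteq> None}"
  have "failure_prob \<beta> n L K G m = measure_pmf.expectation (defect_pmf \<beta> n)
      (\<lambda>D. measure_pmf.prob (random_matrix n L) {G0. \<not> encoding_success n L G0 (mat_vec K G m) D})"
    unfolding failure_prob_def by (simp add: measure_pair_pmf_eq_expectation)
  also have "\<dots> \<le> measure_pmf.expectation (defect_pmf \<beta> n) (\<lambda>D. r ^ ?defects D / r ^ L)"
  proof (intro integral_mono integrable_measure_pmf_finite finite_set_defect_pmf)
    fix D
    have "measure_pmf.prob (random_matrix n L) {G0. \<not> encoding_success n L G0 (mat_vec K G m) D}
        \<le> min 1 (2 ^ ?defects D * (1/2) ^ L)"
      using prob_encoding_failure_le by (simp add: measure_pmf.prob_le_1)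
    also have "\<dots> \<le> r ^ ?defects D / r ^ L"
      using assms(3,4) by (rule min_one_le_power_ratio)
    finally show "measure_pmf.prob (random_matrix n L) {G0. \<not> encoding_success n L G0 (mat_vec K G m) D}
        \<le> r ^ ?defects D / r ^ L" .
  qed
  also have "\<dots> = (1 - \<beta> + \<beta> * r) ^ n / r ^ L"
    using assms expectation_defect_count_power[of \<beta> r n] by simp
  finally show ?thesis .
qed

lemma exists_base_power_gt:
  fixes \<beta> q :: real
  assumes "0 \<le> \<beta>" "\<beta> < q"
  obtains r where "1 < r" "r \<le> 2" "1 - \<beta> + \<beta> * r < r powr q"
proof -
  define r where "r = 2 * q / (\<beta> + q)"
  have "0 < q" "0 < \<beta> + q" using assms by auto
  then have "1 < r" "r \<le> 2" "\<beta> * r < q"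
    using assms by (simp_all add: r_def field_simps)
  have "1 - 1/r \<le> ln r"
    using ln_le_minus_one[of "1/r"] \<open>1 < r\<close> by (simp add: ln_div)
  have "1 - \<beta> + \<beta> * r = 1 + \<beta> * (r - 1)"
    by (simp add: algebra_simps)
  also have "\<dots> < 1 + q * (1 - 1/r)"
  proof -
    have "\<beta> * r * (r - 1) < q * (r - 1)"
      using \<open>\<beta> * r < q\<close> \<open>1 < r\<close> by (intro mult_strict_right_mono) auto
    then show ?thesis
      using \<open>1 < r\<close> by (simp add: field_simps algebra_simps)
  qed
  also have "\<dots> \<le> 1 + q * ln r"
    using \<open>1 - 1/r \<le> ln r\<close> \<open>0 < q\<close> by simp
  also have "\<dots> \<le> exp (q * ln r)"
    by (rule exp_ge_add_one_self)
  also have "\<dots> = r powr q"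
    using \<open>1 < r\<close> by (simp add: powr_def)
  finally show thesis
    using \<open>1 < r\<close> \<open>r \<le> 2\<close> that by blast
qed

lemma failure_prob_le_geometric:
  assumes "0 \<le> \<beta>" "\<beta> \<le> 1" "\<beta> < q"
  obtains \<rho> where "0 \<le> \<rho>" "\<rho> < 1"
    "\<And>n L K G m. q * real n \<le> real L \<Longrightarrow> failure_prob \<beta> n L K G m \<le> \<rho> ^ n"
proof -
  obtain r where r: "1 < r" "r \<le> 2" "1 - \<beta> + \<beta> * r < r powr q"
    using exists_base_power_gt assms(1,3) by blast
  define \<rho> where "\<rho> = (1 - \<beta> + \<beta> * r) / r powr q"
  have "0 \<le> 1 - \<beta> + \<beta> * r"
    using assms(1,2) r(1) by simp
  then have "0 \<le> \<rho>" "\<rho> < 1"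
    using r by (simp_all add: \<rho>_def)
  moreover have "failure_prob \<beta> n L K G m \<le> \<rho> ^ n" if "q * real n \<le> real L" for n L K G m
  proof -
    have "(r powr q) ^ n = r powr (q * real n)"
      using r(1) by (simp add: powr_powr[symmetric] powr_realpow)
    also have "\<dots> \<le> r ^ L"
      using that r(1) by (simp add: powr_realpow[symmetric] powr_mono)
    finally have "(r powr q) ^ n \<le> r ^ L" .
    have "failure_prob \<beta> n L K G m \<le> (1 - \<beta> + \<beta> * r) ^ n / r ^ L"
      using assms(1,2) r(1,2) by (rule failure_prob_le)
    also have "\<dots> \<le> (1 - \<beta> + \<beta> * r) ^ n / (r powr q) ^ n"
      using \<open>(r powr q) ^ n \<le> r ^ L\<close> \<open>0 \<le> 1 - \<beta> + \<beta> * r\<close> r(1)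
      by (intro divide_left_mono) auto
    also have "\<dots> = \<rho> ^ n"
      by (simp add: \<rho>_def power_divide)
    finally show ?thesis .
  qed
  ultimately show thesis
    using that by blast
qed

lemma eventually_linear_lower_bound_of_liminf:
  fixes l :: "nat \<Rightarrow> nat"
  assumes "liminf (\<lambda>n. ereal (real (l n) / real n)) > ereal \<beta>"
  obtains q where "\<beta> < q" "eventually (\<lambda>n. q * real n \<le> real (l n)) sequentially"
proof -
  obtain z where z: "ereal \<beta> < z" "z < liminf (\<lambda>n. ereal (real (l n) / real n))"
    using dense[OF assms] by blast
  then obtain q where q: "ereal \<beta> < ereal q" "ereal q < liminf (\<lambda>n. ereal (real (l n) / real n))"
    by (cases z) auto
  have "eventually (\<lambda>n. q * real n \<le> real (l n)) sequentially"
    using less_LiminfD[OF q(2)] eventually_gt_at_top[of 0]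
    by eventually_elim (simp add: field_simps)
  with q(1) show thesis
    using that by simp
qed

theorem proposition3:
  fixes \<beta> :: real and l k :: "nat \<Rightarrow> nat"
    and G1 :: "nat \<Rightarrow> nat \<Rightarrow> nat \<Rightarrow> bit" and m :: "nat \<Rightarrow> nat \<Rightarrow> bit"
  assumes "0 \<le> \<beta>" and "\<beta> < 1"
    and "liminf (\<lambda>n. ereal (real (l n) / real n)) > ereal \<beta>"
  shows "(\<lambda>n. failure_prob \<beta> n (l n) (k n) (G1 n) (m n)) \<longlonglongrightarrow> 0"
proof -
  obtain q where "\<beta> < q" and linear: "eventually (\<lambda>n. q * real n \<le> real (l n)) sequentially"
    using eventually_linear_lower_bound_of_liminf assms(3) by blast
  obtain \<rho> where \<rho>: "0 \<le> \<rho>" "\<rho> < 1"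
    and geometric: "\<And>n L K G m. q * real n \<le> real L \<Longrightarrow> failure_prob \<beta> n L K G m \<le> \<rho> ^ n"
    using failure_prob_le_geometric[OF assms(1) _ \<open>\<beta> < q\<close>] assms(2) by auto
  have upper: "eventually (\<lambda>n. failure_prob \<beta> n (l n) (k n) (G1 n) (m n) \<le> \<rho> ^ n) sequentially"
    using linear by eventually_elim (rule geometric)
  have lower: "eventually (\<lambda>n. 0 \<le> failure_prob \<beta> n (l n) (k n) (G1 n) (m n)) sequentially"
    by (simp add: failure_prob_def)
  show ?thesis
    using \<rho> by (intro tendsto_sandwich[OF lower upper tendsto_const] LIMSEQ_power_zero) auto
qed

end
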